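(* Let $k\geq 1$. If $R$ is a $k$-clean ring (associative with identity), then the matrix ring $M_n(R)$ is $k$-clean for every positive integer $n$.
   Context: For a positive integer $k$, a ring $S$ is $k$-clean if every element of $S$ can be written as $e+u_1+\cdots+u_k$ with $e=e^2\in S$ and $u_1,\dots,u_k$ units of $S$. *)

theory Defs
  imports "Jordan_Normal_Form.Matrix" "HOL-Algebra.Ring"
begin

definition k_clean :: "nat \<Rightarrow> ('a, 'b) ring_scheme \<Rightarrow> bool" where
  "k_clean k S \<longleftrightarrow>
     (\<forall>x \<in> carrier S. \<exists>e u. e \<in> carrier S \<and> e \<otimes>\<^bsub>S\<^esub> e = e \<and>
        (\<forall>i<k. u i \<in> Units S) \<and>
        x = e \<oplus>\<^bsub>S\<^esub> (\<Oplus>\<^bsub>S\<^esub>i\<in>{..<k}. u i))"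

abbreviation type_ring :: "'a :: ring_1 ring" where
  "type_ring \<equiv> \<lparr> carrier = UNIV, mult = (*), one = 1, zero = 0, add = (+) \<rparr>"

end

theory Submission
  imports Defs "HOL-Algebra.UnivPoly"
begin

text \<open>Split a matrix into blocks \<open>A = [[A1, B], [C, D]]\<close> of sizes \<open>p\<close> and \<open>q\<close>. If
  \<open>A1 = E1 + \<Sum>\<^sub>i U1\<^sub>i\<close> and the Schur complement \<open>D - C w B = E2 + \<Sum>\<^sub>i V\<^sub>i\<close>, where \<open>w\<close> is the
  inverse of \<open>U1\<^sub>0\<close>, then \<open>A\<close> is the idempotent \<open>diag(E1, E2)\<close> plus the units \<open>diag(U1\<^sub>i, V\<^sub>i)\<close>
  for \<open>i > 0\<close> and \<open>[[U1\<^sub>0, B], [C, C w B + V\<^sub>0]]\<close>. The last one is a unit because it equals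
  \<open>[[1, 0], [C w, 1]] \<cdot> diag(U1\<^sub>0, V\<^sub>0) \<cdot> [[1, w B], [0, 1]]\<close>. So \<open>k\<close>-cleanness passes from
  \<open>M\<^sub>p(R)\<close> and \<open>M\<^sub>q(R)\<close> to \<open>M\<^sub>p\<^sub>+\<^sub>q(R)\<close>, and induction on \<open>n\<close>, starting from
  \<open>M\<^sub>1(R) \<cong> R\<close>, proves the theorem.\<close>

lemma ring_ring_mat: "ring (ring_mat TYPE('a :: ring_1) n b)"
  by (unfold_locales, insert add_inv_exists_mat, auto simp: ring_mat_def algebra_simps Units_def)

lemma ring_type_ring: "ring (type_ring :: 'a :: ring_1 ring)"
  by (unfold_locales) (auto simp: algebra_simps Units_def intro: exI[of _ "- x" for x])

lemma (in ring_hom_ring) hom_Units: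
  assumes "x \<in> Units R"
  shows "h x \<in> Units S"
proof -
  obtain y where "y \<in> carrier R" "y \<otimes> x = \<one>" "x \<otimes> y = \<one>"
    using assms unfolding Units_def by blast
  then show ?thesis
    using assms unfolding Units_def by (auto intro!: bexI[of _ "h y"] simp flip: hom_mult)
qed

lemma (in abelian_monoid) finsum_add_singleton:
  assumes "finite I" "j \<in> I" "f \<in> I \<rightarrow> carrier G" "a \<in> carrier G"
  shows "(\<Oplus>i\<in>I. f i \<oplus> (if i = j then a else \<zero>)) = (\<Oplus>i\<in>I. f i) \<oplus> a"
proof -
  have "(\<Oplus>i\<in>I. f i \<oplus> (if i = j then a else \<zero>)) = (\<Oplus>i\<in>I. f i) \<oplus> (\<Oplus>i\<in>I. if i = j then a else \<zero>)"
    using assms by (intro finsum_addf) auto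
  also have "(\<Oplus>i\<in>I. if i = j then a else \<zero>) = a"
    using finsum_singleton[of j I "\<lambda>_. a"] assms by (simp add: eq_commute)
  finally show ?thesis .
qed

lemma k_clean_ring_hom_surj:
  assumes "ring R" "ring S" "h \<in> ring_hom R S" "h ` carrier R = carrier S"
    and "k_clean k R"
  shows "k_clean k S"
  unfolding k_clean_def
proof
  interpret ring_hom_ring R S h using assms(1-3) by (rule ring_hom_ringI2)
  fix y assume "y \<in> carrier S"
  then obtain x where x: "x \<in> carrier R" "y = h x" using assms(4) by auto
  then obtain e u where e: "e \<in> carrier R" "e \<otimes>\<^bsub>R\<^esub> e = e" and u: "\<forall>i<k. u i \<in> Units R"
    and x_eq: "x = e \<oplus>\<^bsub>R\<^esub> (\<Oplus>\<^bsub>R\<^esub>i\<in>{..<k}. u i)"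
    using assms(5) unfolding k_clean_def by blast
  have u_carrier: "u \<in> {..<k} \<rightarrow> carrier R" using u by auto
  have "y = h e \<oplus>\<^bsub>S\<^esub> h (\<Oplus>\<^bsub>R\<^esub>i\<in>{..<k}. u i)"
    using x x_eq e u_carrier by simp
  also have "h (\<Oplus>\<^bsub>R\<^esub>i\<in>{..<k}. u i) = (\<Oplus>\<^bsub>S\<^esub>i\<in>{..<k}. h (u i))"
    using u_carrier by (simp add: comp_def)
  finally have y_eq: "y = h e \<oplus>\<^bsub>S\<^esub> (\<Oplus>\<^bsub>S\<^esub>i\<in>{..<k}. h (u i))" .
  have "h e \<otimes>\<^bsub>S\<^esub> h e = h e" using e by (simp flip: hom_mult)
  with e u y_eq show "\<exists>e u. e \<in> carrier S \<and> e \<otimes>\<^bsub>S\<^esub> e = e \<and> (\<forall>i<k. u i \<in> Units S) \<and>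
      y = e \<oplus>\<^bsub>S\<^esub> (\<Oplus>\<^bsub>S\<^esub>i\<in>{..<k}. u i)"
    by (intro exI[of _ "h e"] exI[of _ "\<lambda>i. h (u i)"]) (simp add: hom_Units)
qed

lemma ring_hom_mat_1x1:
  "(\<lambda>a. mat 1 1 (\<lambda>_. a)) \<in> ring_hom (type_ring :: 'a :: ring_1 ring) (ring_mat TYPE('a) 1 b)"
  by (rule ring_hom_memI) (auto simp: ring_mat_simps scalar_prod_def)

lemma k_clean_ring_mat_1:
  assumes "k_clean k (type_ring :: 'a :: ring_1 ring)"
  shows "k_clean k (ring_mat TYPE('a) 1 ())"
proof (rule k_clean_ring_hom_surj[OF ring_type_ring ring_ring_mat ring_hom_mat_1x1 _ assms])
  have "M = mat 1 1 (\<lambda>_. M $$ (0, 0))" if "M \<in> carrier_mat 1 1" for M :: "'a mat"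
    using that by auto
  then show "(\<lambda>a. mat 1 1 (\<lambda>_. a)) ` carrier type_ring = carrier (ring_mat TYPE('a) 1 ())"
    by (auto simp: ring_mat_simps)
qed

lemma uminus_zero_mat [simp]: "- 0\<^sub>m nr nc = (0\<^sub>m nr nc :: 'a :: group_add mat)"
  by auto

lemma carrier_mat_four_blockE:
  assumes "A \<in> carrier_mat (nr1 + nr2) (nc1 + nc2)"
  obtains A1 B C D where "A1 \<in> carrier_mat nr1 nc1" "B \<in> carrier_mat nr1 nc2"
    "C \<in> carrier_mat nr2 nc1" "D \<in> carrier_mat nr2 nc2" "A = four_block_mat A1 B C D"
  using assms split_block[of A nr1 nc1 _ _ _ _ nr2 nc2] by (metis carrier_matD prod_cases4)

lemma Units_ring_matI:
  assumes "A \<in> carrier_mat n n" "B \<in> carrier_mat n n" "A * B = 1\<^sub>m n" "B * A = 1\<^sub>m n"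
  shows "A \<in> Units (ring_mat TYPE('a :: semiring_1) n b)"
  using assms unfolding Units_def ring_mat_simps by blast

lemma Units_ring_matE:
  assumes "A \<in> Units (ring_mat TYPE('a :: semiring_1) n b)"
  obtains B where "A \<in> carrier_mat n n" "B \<in> carrier_mat n n" "A * B = 1\<^sub>m n" "B * A = 1\<^sub>m n"
  using assms unfolding Units_def ring_mat_simps by blast

lemma four_block_mat_diag_Units:
  assumes "A \<in> Units (ring_mat TYPE('a :: semiring_1) p b)" "D \<in> Units (ring_mat TYPE('a) q b)"
  shows "four_block_mat A (0\<^sub>m p q) (0\<^sub>m q p) D \<in> Units (ring_mat TYPE('a) (p + q) b)"
proof -
  obtain A' where A: "A \<in> carrier_mat p p" "A' \<in> carrier_mat p p" "A * A' = 1\<^sub>m p" "A' * A = 1\<^sub>m p"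
    using assms(1) by (rule Units_ring_matE)
  obtain D' where D: "D \<in> carrier_mat q q" "D' \<in> carrier_mat q q" "D * D' = 1\<^sub>m q" "D' * D = 1\<^sub>m q"
    using assms(2) by (rule Units_ring_matE)
  show ?thesis
  proof (rule Units_ring_matI[where B = "four_block_mat A' (0\<^sub>m p q) (0\<^sub>m q p) D'"])
    show "four_block_mat A (0\<^sub>m p q) (0\<^sub>m q p) D * four_block_mat A' (0\<^sub>m p q) (0\<^sub>m q p) D' = 1\<^sub>m (p + q)"
      using A D by (simp add: mult_four_block_mat[of _ p p _ q _ q _ _ p _ q])
    show "four_block_mat A' (0\<^sub>m p q) (0\<^sub>m q p) D' * four_block_mat A (0\<^sub>m p q) (0\<^sub>m q p) D = 1\<^sub>m (p + q)"
      using A D by (simp add: mult_four_block_mat[of _ p p _ q _ q _ _ p _ q])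
  qed (use A D in auto)
qed

lemma four_block_mat_lower_unitriangular_Units:
  assumes "C \<in> carrier_mat q p"
  shows "four_block_mat (1\<^sub>m p) (0\<^sub>m p q) C (1\<^sub>m q) \<in> Units (ring_mat TYPE('a :: ring_1) (p + q) b)"
  by (rule Units_ring_matI[where B = "four_block_mat (1\<^sub>m p) (0\<^sub>m p q) (- C) (1\<^sub>m q)"])
    (use assms in \<open>simp_all add: mult_four_block_mat[of _ p p _ q _ q _ _ p _ q] add_uminus_minus_mat\<close>)

lemma four_block_mat_upper_unitriangular_Units:
  assumes "B \<in> carrier_mat p q"
  shows "four_block_mat (1\<^sub>m p) B (0\<^sub>m q p) (1\<^sub>m q) \<in> Units (ring_mat TYPE('a :: ring_1) (p + q) b)"
  by (rule Units_ring_matI[where B = "four_block_mat (1\<^sub>m p) (- B) (0\<^sub>m q p) (1\<^sub>m q)"])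
    (use assms in \<open>simp_all add: mult_four_block_mat[of _ p p _ q _ q _ _ p _ q] add_uminus_minus_mat\<close>)

lemma four_block_mat_Schur_Units:
  fixes u :: "'a :: ring_1 mat"
  assumes u: "u \<in> carrier_mat p p" "w \<in> carrier_mat p p" "u * w = 1\<^sub>m p" "w * u = 1\<^sub>m p"
    and V: "V \<in> Units (ring_mat TYPE('a) q b)"
    and B: "B \<in> carrier_mat p q" and C: "C \<in> carrier_mat q p"
  shows "four_block_mat u B C (C * w * B + V) \<in> Units (ring_mat TYPE('a) (p + q) b)"
proof -
  interpret M: ring "ring_mat TYPE('a) (p + q) b" by (rule ring_ring_mat)
  have V_carrier: "V \<in> carrier_mat q q" using V by (auto elim: Units_ring_matE)
  define L where "L = four_block_mat (1\<^sub>m p) (0\<^sub>m p q) (C * w) (1\<^sub>m q)"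
  define T where "T = four_block_mat (1\<^sub>m p) (w * B) (0\<^sub>m q p) (1\<^sub>m q)"
  have u_Units: "u \<in> Units (ring_mat TYPE('a) p b)" using u by (rule Units_ring_matI)
  have "C * w * u = C" using u C by (simp add: assoc_mult_mat[of C q p])
  then have "L * four_block_mat u (0\<^sub>m p q) (0\<^sub>m q p) V = four_block_mat u (0\<^sub>m p q) C V"
    unfolding L_def using u C V_carrier by (simp add: mult_four_block_mat[of _ p p _ q _ q _ _ p _ q])
  also have "\<dots> * T = four_block_mat u B C (C * w * B + V)"
  proof -
    have "u * (w * B) = B" using u B by (simp flip: assoc_mult_mat[of u p p])
    moreover have "C * (w * B) = C * w * B" using u B C by (simp add: assoc_mult_mat[of C q p])
    ultimately show ?thesis
      unfolding T_def using u B C V_carrier by (simp add: mult_four_block_mat[of _ p p _ q _ q _ _ p _ q])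
  qed
  finally have "four_block_mat u B C (C * w * B + V) = L * four_block_mat u (0\<^sub>m p q) (0\<^sub>m q p) V * T" ..
  moreover have "L \<in> Units (ring_mat TYPE('a) (p + q) b)"
    unfolding L_def using u C by (simp add: four_block_mat_lower_unitriangular_Units)
  moreover have "T \<in> Units (ring_mat TYPE('a) (p + q) b)"
    unfolding T_def using u B by (simp add: four_block_mat_upper_unitriangular_Units)
  ultimately show ?thesis
    using four_block_mat_diag_Units[OF u_Units V] M.Units_m_closed by (metis ring_mat_simps(1))
qed

lemma finsum_four_block_mat_diag:
  assumes "finite I" "A \<in> I \<rightarrow> carrier_mat p p" "D \<in> I \<rightarrow> carrier_mat q q"
  shows "finsum (ring_mat TYPE('a :: ring_1) (p + q) b) (\<lambda>i. four_block_mat (A i) (0\<^sub>m p q) (0\<^sub>m q p) (D i)) I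
    = four_block_mat (finsum (ring_mat TYPE('a) p b) A I) (0\<^sub>m p q) (0\<^sub>m q p) (finsum (ring_mat TYPE('a) q b) D I)"
proof -
  interpret M: ring "ring_mat TYPE('a) (p + q) b" by (rule ring_ring_mat)
  interpret Mp: ring "ring_mat TYPE('a) p b" by (rule ring_ring_mat)
  interpret Mq: ring "ring_mat TYPE('a) q b" by (rule ring_ring_mat)
  show ?thesis
    using assms
  proof (induction I rule: finite_induct)
    case (insert i I)
    have "finsum (ring_mat TYPE('a) p b) A I \<in> carrier_mat p p"
      and "finsum (ring_mat TYPE('a) q b) D I \<in> carrier_mat q q"
      using insert.prems Mp.finsum_closed Mq.finsum_closed by (auto simp: ring_mat_simps)
    with insert show ?case
      by (auto simp: ring_mat_simps Pi_def add_four_block_mat[of _ p p _ q _ q])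
  qed (simp add: ring_mat_simps)
qed

lemma four_block_mat_eq_diag_add_finsum:
  fixes B :: "'a :: ring_1 mat"
  assumes I: "finite I" "j \<in> I"
    and carriers: "B \<in> carrier_mat p q" "C \<in> carrier_mat q p" "D \<in> carrier_mat q q"
      "X \<in> carrier_mat q q" "E1 \<in> carrier_mat p p" "E2 \<in> carrier_mat q q"
    and U: "U \<in> I \<rightarrow> carrier_mat p p" and V: "V \<in> I \<rightarrow> carrier_mat q q"
    and A1: "A1 = E1 + finsum (ring_mat TYPE('a) p b) U I"
    and D: "D - X = E2 + finsum (ring_mat TYPE('a) q b) V I"
  shows "four_block_mat A1 B C D = four_block_mat E1 (0\<^sub>m p q) (0\<^sub>m q p) E2
    + finsum (ring_mat TYPE('a) (p + q) b) (\<lambda>i. four_block_mat (U i) (0\<^sub>m p q) (0\<^sub>m q p) (V i)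
        + (if i = j then four_block_mat (0\<^sub>m p p) B C X else 0\<^sub>m (p + q) (p + q))) I"
    (is "_ = ?E + finsum ?M ?U I")
proof -
  interpret M: ring ?M by (rule ring_ring_mat)
  interpret Mp: ring "ring_mat TYPE('a) p b" by (rule ring_ring_mat)
  interpret Mq: ring "ring_mat TYPE('a) q b" by (rule ring_ring_mat)
  define N where "N = four_block_mat (0\<^sub>m p p) B C X"
  have N: "N \<in> carrier_mat (p + q) (p + q)" using carriers by (simp add: N_def)
  have sums: "finsum (ring_mat TYPE('a) p b) U I \<in> carrier_mat p p"
    "finsum (ring_mat TYPE('a) q b) V I \<in> carrier_mat q q"
    using Mp.finsum_closed[of U] Mq.finsum_closed[of V] U V by (simp_all add: ring_mat_simps)
  have "finsum ?M ?U I = four_block_mat (finsum (ring_mat TYPE('a) p b) U I) (0\<^sub>m p q) (0\<^sub>m q p)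
      (finsum (ring_mat TYPE('a) q b) V I) + N"
    using M.finsum_add_singleton[of I j "\<lambda>i. four_block_mat (U i) (0\<^sub>m p q) (0\<^sub>m q p) (V i)" N] I N U V
    unfolding N_def ring_mat_simps by (simp add: finsum_four_block_mat_diag Pi_def)
  then have "?E + finsum ?M ?U I = four_block_mat A1 (0\<^sub>m p q) (0\<^sub>m q p) (D - X) + N"
    unfolding A1 D using carriers sums N
    by (simp add: add_four_block_mat[of _ p p _ q _ q] flip: assoc_add_mat[of _ "p + q" "p + q"])
  also have "\<dots> = four_block_mat A1 B C D"
    unfolding A1 N_def using carriers sums by (auto simp: add_four_block_mat[of _ p p _ q _ q])
  finally show ?thesis ..
qed

lemma k_clean_ring_mat_add:
  assumes k: "k \<ge> 1"
    and clean_p: "k_clean k (ring_mat TYPE('a :: ring_1) p ())"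
    and clean_q: "k_clean k (ring_mat TYPE('a) q ())"
  shows "k_clean k (ring_mat TYPE('a) (p + q) ())"
  unfolding k_clean_def ring_mat_simps
proof
  let ?Mp = "ring_mat TYPE('a) p ()" and ?Mq = "ring_mat TYPE('a) q ()"
    and ?M = "ring_mat TYPE('a) (p + q) ()"
  fix A :: "'a mat" assume "A \<in> carrier_mat (p + q) (p + q)"
  then obtain A1 B C D where
    blocks: "A1 \<in> carrier_mat p p" "B \<in> carrier_mat p q" "C \<in> carrier_mat q p" "D \<in> carrier_mat q q"
    and A: "A = four_block_mat A1 B C D"
    by (rule carrier_mat_four_blockE)
  obtain E1 U1 where E1: "E1 \<in> carrier_mat p p" "E1 * E1 = E1"
    and U1: "\<forall>i<k. U1 i \<in> Units ?Mp" and A1: "A1 = E1 + finsum ?Mp U1 {..<k}"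
    using clean_p blocks(1) unfolding k_clean_def ring_mat_simps by blast
  obtain w where w: "U1 0 \<in> carrier_mat p p" "w \<in> carrier_mat p p" "U1 0 * w = 1\<^sub>m p" "w * U1 0 = 1\<^sub>m p"
    using U1 k by (auto elim: Units_ring_matE)
  define X where "X = C * w * B"
  have X: "X \<in> carrier_mat q q" using blocks w by (simp add: X_def)
  obtain E2 V where E2: "E2 \<in> carrier_mat q q" "E2 * E2 = E2"
    and V: "\<forall>i<k. V i \<in> Units ?Mq" and D: "D - X = E2 + finsum ?Mq V {..<k}"
    using clean_q blocks(4) X unfolding k_clean_def ring_mat_simps by (meson minus_carrier_mat)
  have U1_carrier: "U1 \<in> {..<k} \<rightarrow> carrier_mat p p" and V_carrier: "V \<in> {..<k} \<rightarrow> carrier_mat q q"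
    using U1 V by (auto elim: Units_ring_matE)
  define E where "E = four_block_mat E1 (0\<^sub>m p q) (0\<^sub>m q p) E2"
  define U where "U i = four_block_mat (U1 i) (0\<^sub>m p q) (0\<^sub>m q p) (V i)
    + (if i = 0 then four_block_mat (0\<^sub>m p p) B C X else 0\<^sub>m (p + q) (p + q))" for i
  have "U i \<in> Units ?M" if "i < k" for i
  proof (cases "i = 0")
    case True
    have V0: "V 0 \<in> carrier_mat q q" using V_carrier k by auto
    have "U i = four_block_mat (U1 0) B C (X + V 0)"
      using True blocks X V0 w
      by (simp add: U_def add_four_block_mat[of _ p p _ q _ q] comm_add_mat[of "V 0" q q])
    moreover have "V 0 \<in> Units ?Mq" using V k by simp
    ultimately show ?thesis
      using four_block_mat_Schur_Units[OF w _ blocks(2,3)] by (simp add: X_def)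
  next
    case False
    have "U1 i \<in> carrier_mat p p" "V i \<in> carrier_mat q q" using U1_carrier V_carrier that by auto
    then show ?thesis
      using False four_block_mat_diag_Units[OF U1[rule_format, OF that] V[rule_format, OF that]]
      by (simp add: U_def)
  qed
  moreover have "A = E + finsum ?M U {..<k}"
    unfolding A E_def U_def
    by (rule four_block_mat_eq_diag_add_finsum[OF _ _ blocks(2-4) X E1(1) E2(1) U1_carrier V_carrier A1 D])
      (use k in auto)
  moreover have "E \<in> carrier_mat (p + q) (p + q)" "E * E = E"
    using E1 E2 by (simp_all add: E_def mult_four_block_mat[of _ p p _ q _ q _ _ p _ q])
  ultimately show "\<exists>E U. E \<in> carrier_mat (p + q) (p + q) \<and> E * E = E \<and> (\<forall>i<k. U i \<in> Units ?M)
      \<and> A = E + finsum ?M U {..<k}"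
    by blast
qed

theorem corollary6:
  fixes k n :: nat
  assumes "k \<ge> 1"
    and "k_clean k (type_ring :: 'a :: ring_1 ring)"
    and "n \<ge> 1"
  shows "k_clean k (ring_mat TYPE('a) n ())"
  using assms(3)
proof (induction n rule: nat_induct_at_least)
  case base
  then show ?case using assms(2) by (rule k_clean_ring_mat_1)
next
  case (Suc n)
  then show ?case
    using k_clean_ring_mat_add[OF assms(1) Suc.IH k_clean_ring_mat_1[OF assms(2)]] by simp
qed

end
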